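(* Let $(X,d)$ be a metric space, $v,x\in X$, and $0<\varepsilon\le\frac13$. Suppose $P$ is a path $v=p_0,p_1,\ldots,p_l=x$ of points of $X$ such that $d(v,p_i)\le \varepsilon\, d(v,p_{i+1})$ for all $1\le i\le l-1$. Then $d_P(v,x)\le (1+3\varepsilon)\,d(v,x)$.
   Context: $d_P(v,x)$ denotes the length of the path $P$, i.e. $\sum_{i=1}^{l} d(p_{i-1},p_i)$. *)

theory Defs
  imports "HOL-Analysis.Analysis"
begin

definition path_length :: "(nat \<Rightarrow> 'a::metric_space) \<Rightarrow> nat \<Rightarrow> real" where
  "path_length p l = (\<Sum>i=1..l. dist (p (i - 1)) (p i))"

end

theory Submission
  imports Defs
begin

text \<open>Induct along the path with the invariant d_P(v, p k) \<le> (1 + 3\<epsilon>) d(v, p k).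
  The step from p k to p (k+1) costs at most d(v, p k) + d(v, p (k+1)) by the triangle
  inequality through v, so with a = d(v, p k) \<le> \<epsilon> b, b = d(v, p (k+1)) the new length is at
  most (2 + 3\<epsilon>) a + b \<le> ((2 + 3\<epsilon>) \<epsilon> + 1) b, and (2 + 3\<epsilon>) \<epsilon> \<le> 3\<epsilon> exactly when \<epsilon> \<le> 1/3.\<close>

lemma path_length_0 [simp]: "path_length p 0 = 0"
  by (simp add: path_length_def)

lemma path_length_Suc:
  "path_length p (Suc k) = path_length p k + dist (p k) (p (Suc k))"
  by (simp add: path_length_def)

lemma radial_step_bound:
  fixes \<epsilon> a b :: real
  assumes "0 < \<epsilon>" "\<epsilon> \<le> 1/3" "0 \<le> b" "a \<le> \<epsilon> * b"
  shows "(1 + 3 * \<epsilon>) * a + (a + b) \<le> (1 + 3 * \<epsilon>) * b"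
proof -
  have "(2 + 3 * \<epsilon>) * a \<le> (2 + 3 * \<epsilon>) * (\<epsilon> * b)"
    using assms by (intro mult_left_mono) auto
  moreover have "(2 + 3 * \<epsilon>) * \<epsilon> * b \<le> 3 * \<epsilon> * b"
    using assms by (intro mult_right_mono) (auto simp: algebra_simps)
  ultimately show ?thesis by (simp add: algebra_simps)
qed

lemma path_length_le_radial:
  fixes p :: "nat \<Rightarrow> 'a::metric_space"
  assumes "0 < \<epsilon>" "\<epsilon> \<le> 1/3" "k \<le> l"
    and radial: "\<And>i. 1 \<le> i \<Longrightarrow> i < l \<Longrightarrow> dist (p 0) (p i) \<le> \<epsilon> * dist (p 0) (p (i + 1))"
  shows "path_length p k \<le> (1 + 3 * \<epsilon>) * dist (p 0) (p k)"
  using \<open>k \<le> l\<close>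
proof (induction k)
  case 0
  then show ?case by simp
next
  case (Suc k)
  have triangle: "dist (p k) (p (Suc k)) \<le> dist (p 0) (p k) + dist (p 0) (p (Suc k))"
    by (metis dist_commute dist_triangle)
  show ?case
  proof (cases "k = 0")
    case True
    have "dist (p 0) (p 1) \<le> (1 + 3 * \<epsilon>) * dist (p 0) (p 1)"
      using assms(1) zero_le_dist[of "p 0" "p 1"] by (simp add: algebra_simps)
    then show ?thesis using True by (simp add: path_length_def)
  next
    case False
    then have "dist (p 0) (p k) \<le> \<epsilon> * dist (p 0) (p (Suc k))"
      using radial[of k] Suc.prems by simp
    then have "(1 + 3 * \<epsilon>) * dist (p 0) (p k) + (dist (p 0) (p k) + dist (p 0) (p (Suc k)))
        \<le> (1 + 3 * \<epsilon>) * dist (p 0) (p (Suc k))"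
      using assms(1,2) by (intro radial_step_bound) auto
    then show ?thesis
      using Suc triangle by (simp add: path_length_Suc)
  qed
qed

theorem lemma9:
  fixes p :: "nat \<Rightarrow> 'a::metric_space" and v x :: 'a and l :: nat and \<epsilon> :: real
  assumes "0 < \<epsilon>" and "\<epsilon> \<le> 1/3"
    and "p 0 = v" and "p l = x"
    and "\<And>i. 1 \<le> i \<Longrightarrow> i \<le> l - 1 \<Longrightarrow> dist v (p i) \<le> \<epsilon> * dist v (p (i + 1))"
  shows "path_length p l \<le> (1 + 3 * \<epsilon>) * dist v x"
proof -
  have "dist (p 0) (p i) \<le> \<epsilon> * dist (p 0) (p (i + 1))" if "1 \<le> i" "i < l" for i
    using assms(3,5) that by simp
  then show ?thesis
    using path_length_le_radial[of \<epsilon> l l p] assms(1-4) by simp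
qed

end
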